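(* Let $r\ge2$ and for $1\le j\le r$ let $(\alpha^{[j]}_h)_{h\in\mathbb{N}}$ and $(\tilde\alpha^{[j]}_h)_{h\in\mathbb{N}}$ be sequences of positive reals with $\alpha^{[j]}_h=1/\tilde\alpha^{[j]}_h$ for all $h\ge1$. Let $\mathbf{X}_{\mathbf{n},[\mathbf{A},I]}$ be the vector of numbers of remaining balls of types $1,\dots,r-1$ in the $r$-type urn model I with weights $\alpha^{[j]}$, and $\mathbf{X}_{\mathbf{n},[\tilde{\mathbf{A}},II]}$ the corresponding vector in the $r$-type urn model II with weights $\tilde\alpha^{[j]}$, both started from $\mathbf{n}=(n_1,\dots,n_r)$. Then for all $\mathbf{n}$ and $\mathbf{k}$, \[ \mathbb{P}\{\mathbf{X}_{\mathbf{n},[\mathbf{A},I]}=\mathbf{k}\}=\mathbb{P}\{\mathbf{X}_{\mathbf{n},[\tilde{\mathbf{A}},II]}=\mathbf{k}\}. \]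
   Context: Both models have balls of types $1,\dots,r$, and in both the drawn ball is discarded and the process stops when either all type $r$ balls or all balls of types $1,\dots,r-1$ have been drawn; the vector records the numbers of type $1,\dots,r-1$ balls at that time. Model I: with $n'_j$ balls of type $j$ present, type $\ell$ is drawn with probability $\alpha^{[\ell]}_{n'_\ell}/\sum_{j=1}^r\alpha^{[j]}_{n'_j}$, where $\alpha^{[j]}_0=0$. Model II: type $\ell$ is drawn with probability $\frac{(1-\delta_{n'_\ell,0})\prod_{j\neq\ell}(\tilde\alpha^{[j]}_{n'_j})^{1-\delta_{n'_j,0}}}{\sum_{h=1}^{r}(1-\delta_{n'_h,0})\prod_{j\neq h}(\tilde\alpha^{[j]}_{n'_j})^{1-\delta_{n'_j,0}}}$, with $\delta$ the Kronecker delta. *)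

theory Defs
  imports Complex_Main
begin

text \<open>States of an r-type urn: a function n :: nat \<Rightarrow> nat, where n j (1 \<le> j \<le> r)
  is the number of balls of type j currently present.\<close>

definition urn_stopped :: "nat \<Rightarrow> (nat \<Rightarrow> nat) \<Rightarrow> bool" where
  "urn_stopped r n \<longleftrightarrow> n r = 0 \<or> (\<forall>j\<in>{1..r-1}. n j = 0)"

definition urn_vec :: "nat \<Rightarrow> (nat \<Rightarrow> nat) \<Rightarrow> (nat \<Rightarrow> nat)" where
  "urn_vec r n = (\<lambda>j. if j \<in> {1..r-1} then n j else 0)"

text \<open>Generic urn: w n l is the (unnormalised) weight of drawing type l in state n;
  type l is drawn with probability w n l / (\<Sum>h=1..r. w n h), and a drawn ball is
  discarded.  urn_prob r w n k is the probability that, started from n, the recorded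
  vector at stopping time equals k.\<close>
function urn_prob :: "nat \<Rightarrow> ((nat \<Rightarrow> nat) \<Rightarrow> nat \<Rightarrow> real) \<Rightarrow> (nat \<Rightarrow> nat) \<Rightarrow> (nat \<Rightarrow> nat) \<Rightarrow> real" where
  "urn_prob r w n k =
     (if urn_stopped r n then (if urn_vec r n = k then 1 else 0)
      else (\<Sum>l\<in>{l\<in>{1..r}. 0 < n l}.
              (w n l / (\<Sum>h=1..r. w n h)) * urn_prob r w (n(l := n l - 1)) k))"
  by pat_completeness auto
termination
proof (relation "measure (\<lambda>(r, w, n, k). sum n {1..r})", goal_cases)
  case 1 show ?case by simp
next
  case (2 r w n k l)
  then have l: "l \<in> {1..r}" "0 < n l" by auto
  have "sum (n(l := n l - 1)) {1..r} < sum n {1..r}"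
    using l by (intro sum_strict_mono_ex1) auto
  then show ?case by simp
qed

definition weight_I :: "nat \<Rightarrow> (nat \<Rightarrow> nat \<Rightarrow> real) \<Rightarrow> (nat \<Rightarrow> nat) \<Rightarrow> nat \<Rightarrow> real" where
  "weight_I r \<alpha> n l = (if n l = 0 then 0 else \<alpha> l (n l))"

definition weight_II :: "nat \<Rightarrow> (nat \<Rightarrow> nat \<Rightarrow> real) \<Rightarrow> (nat \<Rightarrow> nat) \<Rightarrow> nat \<Rightarrow> real" where
  "weight_II r \<alpha>t n l =
     (if n l = 0 then 0 else 1) *
     (\<Prod>j\<in>{1..r} - {l}. \<alpha>t j (n j) ^ (if n j = 0 then 0 else 1))"

definition urn_prob_I :: "nat \<Rightarrow> (nat \<Rightarrow> nat \<Rightarrow> real) \<Rightarrow> (nat \<Rightarrow> nat) \<Rightarrow> (nat \<Rightarrow> nat) \<Rightarrow> real" where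
  "urn_prob_I r \<alpha> n k = urn_prob r (weight_I r \<alpha>) n k"

definition urn_prob_II :: "nat \<Rightarrow> (nat \<Rightarrow> nat \<Rightarrow> real) \<Rightarrow> (nat \<Rightarrow> nat) \<Rightarrow> (nat \<Rightarrow> nat) \<Rightarrow> real" where
  "urn_prob_II r \<alpha>t n k = urn_prob r (weight_II r \<alpha>t) n k"

end

theory Submission
  imports Defs
begin

text \<open>Since \<open>\<alpha> l h * \<alpha>t l h = 1\<close>, the model II weights in a state \<open>n\<close> are the
  model I weights multiplied by the common factor \<open>\<Prod>j. \<alpha>t j (n j)\<close>, taken over the
  types \<open>j\<close> still present.
  A nonzero factor common to all weights of a state cancels in the normalisation, so both
  urns have the same transition probabilities and hence the same law at stopping time.\<close>

lemma urn_prob_scaled_weights: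
  assumes "\<And>n l. l \<in> {1..r} \<Longrightarrow> w' n l = c n * w n l"
    and "\<And>n. c n \<noteq> 0"
  shows "urn_prob r w n k = urn_prob r w' n k"
  using assms
proof (induction r w n k rule: urn_prob.induct)
  case (1 r w n k)
  show ?case
  proof (cases "urn_stopped r n")
    case True
    then show ?thesis by (simp add: urn_prob.simps[of r w n k] urn_prob.simps[of r w' n k])
  next
    case False
    have total: "(\<Sum>h=1..r. w' n h) = c n * (\<Sum>h=1..r. w n h)"
      unfolding sum_distrib_left by (rule sum.cong) (use "1.prems" in auto)
    have "w n l / (\<Sum>h=1..r. w n h) * urn_prob r w (n(l := n l - 1)) k =
          w' n l / (\<Sum>h=1..r. w' n h) * urn_prob r w' (n(l := n l - 1)) k"
      if l: "l \<in> {l\<in>{1..r}. 0 < n l}" for l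
    proof -
      have "urn_prob r w (n(l := n l - 1)) k = urn_prob r w' (n(l := n l - 1)) k"
        using "1.IH"[OF False l] "1.prems" by blast
      moreover have "w' n l = c n * w n l" using l "1.prems" by auto
      ultimately show ?thesis using "1.prems"(2) unfolding total by (simp del: urn_prob.simps)
    qed
    then show ?thesis
      unfolding urn_prob.simps[of r w n k] urn_prob.simps[of r w' n k]
      using False by (simp only: if_False) (rule sum.cong[OF refl])
  qed
qed

lemma weight_II_eq_scaled_weight_I:
  assumes "l \<in> {1..r}" and "n l \<noteq> 0 \<Longrightarrow> \<alpha> l (n l) * \<alpha>t l (n l) = 1"
  shows "weight_II r \<alpha>t n l =
           (\<Prod>j\<in>{1..r}. \<alpha>t j (n j) ^ (if n j = 0 then 0 else 1)) * weight_I r \<alpha> n l"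
proof (cases "n l = 0")
  case True
  then show ?thesis by (simp add: weight_I_def weight_II_def)
next
  case False
  have "(\<Prod>j\<in>{1..r}. \<alpha>t j (n j) ^ (if n j = 0 then 0 else 1)) * \<alpha> l (n l)
        = (\<alpha> l (n l) * \<alpha>t l (n l)) * (\<Prod>j\<in>{1..r} - {l}. \<alpha>t j (n j) ^ (if n j = 0 then 0 else 1))"
    using assms(1) False by (simp add: prod.remove)
  then show ?thesis
    using assms(2) False by (simp add: weight_I_def weight_II_def)
qed

theorem theorem6:
  fixes r :: nat and \<alpha> \<alpha>t :: "nat \<Rightarrow> nat \<Rightarrow> real" and n k :: "nat \<Rightarrow> nat"
  assumes "r \<ge> 2"
    and "\<forall>j\<in>{1..r}. \<forall>h. 0 < \<alpha> j h"
    and "\<forall>j\<in>{1..r}. \<forall>h. 0 < \<alpha>t j h"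
    and "\<forall>j\<in>{1..r}. \<forall>h\<ge>1. \<alpha> j h = 1 / \<alpha>t j h"
  shows "urn_prob_I r \<alpha> n k = urn_prob_II r \<alpha>t n k"
proof -
  define c where "c n = (\<Prod>j\<in>{1..r}. \<alpha>t j (n j) ^ (if n j = 0 then 0 else 1))" for n
  have "c n \<noteq> 0" for n
    unfolding c_def using assms(3) by (auto intro!: prod_pos less_imp_neq[symmetric])
  moreover have "weight_II r \<alpha>t n l = c n * weight_I r \<alpha> n l" if "l \<in> {1..r}" for n l
    unfolding c_def
  proof (rule weight_II_eq_scaled_weight_I[OF that])
    assume "n l \<noteq> 0"
    then show "\<alpha> l (n l) * \<alpha>t l (n l) = 1"
      using assms(3,4) that by (simp add: less_imp_neq[symmetric])
  qed
  ultimately show ?thesis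
    unfolding urn_prob_I_def urn_prob_II_def by (rule urn_prob_scaled_weights[rotated])
qed

end
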